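(* (i) For any $k,l\ge1$, $v\in\mathfrak{H}y$, $w\in\mathfrak{H}^1$: $\gamma_\hbar^t(z_k)v\ast_+z_lw=\gamma_\hbar^t(z_k)(v\ast_+z_lw)+z_l\bigl(\gamma_\hbar^t(z_k)v\ast_+w\bigr)+(1-t)(z_k\circ_+z_l)(v\ast_+w)$. (ii) For any $k,l\ge1$, $v,w\in\mathfrak{H}^1$: $S_\hbar^t(z_kv)\ast_+z_lw=\gamma_\hbar^t(z_k)\bigl(S_\hbar^t(v)\ast_+z_lw\bigr)+z_l\bigl(S_\hbar^t(z_kv)\ast_+w\bigr)+(1-t)(z_k\circ_+z_l)\bigl(S_\hbar^t(v)\ast_+w\bigr)$. (iii) For any $k\ge0$, $l\ge1$, $v=z_pV$ with $p\ge1$, $V\in\mathfrak{H}^1$, and $w\in\mathfrak{H}y$: $x^kv\ast_+\gamma_\hbar^t(z_l)w=z_{k+p}\bigl(V\ast_+\gamma_\hbar^t(z_l)w\bigr)+\gamma_\hbar^t(z_l)(x^kv\ast_+w)+(1-t)(z_{k+p}\circ_+z_l)(V\ast_+w)$.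
   Context: Let $\hbar,t$ be formal variables and $\mathfrak{H}=\mathbb{Q}[\hbar,t]\langle x,y\rangle$ the noncommutative polynomial algebra over $\mathbb{Q}[\hbar,t]$; put $\mathfrak{H}^1=\mathbb{Q}[\hbar,t]+\mathfrak{H}y$ and $z_j=x^{j-1}y$ ($j\ge1$). Let $\mathfrak z$ be the $\mathbb{Q}[\hbar,t]$-span of $\{z_j\}$, with bilinear product $z_i\circ_+ z_j=z_{i+j}+\hbar z_{i+j-1}$, and for $a\in\mathfrak z$, $b\in\mathfrak{H}^1$ the product $ab$ denotes concatenation. Let $\gamma_\hbar^t$ be the algebra automorphism of $\mathfrak{H}$ with $\gamma_\hbar^t(x)=x$, $\gamma_\hbar^t(y)=tx+y+\hbar t$ (so $\gamma_\hbar^t(z_k)=x^{k-1}(tx+y+\hbar t)$). Let $S_\hbar^t:\mathfrak{H}^1\to\mathfrak{H}^1$ be the $\mathbb{Q}[\hbar,t]$-linear map with $S_\hbar^t(1)=1$ and $S_\hbar^t(z_kw)=z_kS_\hbar^t(w)+t\,z_k\circ_+S_\hbar^t(w)$ for words $w\in\mathfrak{H}^1$, where $\circ_+$ acts on $\mathfrak{H}^1$ via $z_i\circ_+1=0$, $z_i\circ_+(z_jw)=(z_i\circ_+z_j)w$. The product $\ast_+$ on $\mathfrak{H}^1$ is the $\mathbb{Q}[\hbar,t]$-bilinear product with $1\ast_+w=w\ast_+1=w$ and $z_iu\ast_+z_jv=z_i(u\ast_+z_jv)+z_j(z_iu\ast_+v)+(z_i\circ_+z_j)(u\ast_+v)$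 for $i,j\ge1$ and words $u,v,w$. *)

theory Defs
  imports "HOL-Library.Poly_Mapping" "HOL-Computational_Algebra.Polynomial"
begin

text \<open>Coefficients: Q[hbar,t] is rendered as rat poly poly; the outer variable is t,
  the inner variable (embedded as a constant polynomial) is hbar.\<close>
type_synonym R = "rat poly poly"

definition tt :: R where "tt = [:0, 1:]"
definition hb :: R where "hb = [:[:0, 1:]:]"

datatype letter = X | Y

text \<open>An element of the noncommutative polynomial algebra is a finitely supported
  function from words (lists of letters) to coefficients.\<close>
type_synonym H = "letter list \<Rightarrow>\<^sub>0 R"

definition wd :: "letter list \<Rightarrow> H" where "wd u = Poly_Mapping.single u 1"
definition sc :: "R \<Rightarrow> H" where "sc c = Poly_Mapping.single [] c"
definition hsmult :: "R \<Rightarrow> H \<Rightarrow> H" where "hsmult r p = Poly_Mapping.map (\<lambda>c. r * c) p"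

definition lin :: "(letter list \<Rightarrow> H) \<Rightarrow> H \<Rightarrow> H" where
  "lin f p = (\<Sum>u\<in>Poly_Mapping.keys p. hsmult (Poly_Mapping.lookup p u) (f u))"

definition cat :: "H \<Rightarrow> H \<Rightarrow> H" where
  "cat p q = lin (\<lambda>u. lin (\<lambda>v. wd (u @ v)) q) p"

definition xx :: H where "xx = wd [X]"
definition yy :: H where "yy = wd [Y]"
definition xpow :: "nat \<Rightarrow> H" where "xpow k = wd (replicate k X)"

definition z :: "nat \<Rightarrow> H" where "z j = wd (replicate (j - 1) X @ [Y])"

definition H1 :: "H set" where "H1 = {p. \<forall>u\<in>Poly_Mapping.keys p. u = [] \<or> last u = Y}"
definition Hy :: "H set" where "Hy = {p. \<forall>u\<in>Poly_Mapping.keys p. u \<noteq> [] \<and> last u = Y}"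

text \<open>Decomposition of a word z_i u' into (i, u').\<close>
definition zidx :: "letter list \<Rightarrow> nat" where
  "zidx u = length (takeWhile (\<lambda>c. c = X) u) + 1"
definition ztail :: "letter list \<Rightarrow> letter list" where
  "ztail u = drop (zidx u) u"

lemma ztail_shorter: "u \<noteq> [] \<Longrightarrow> length (ztail u) < length u"
  by (simp add: ztail_def zidx_def)

definition circz :: "nat \<Rightarrow> nat \<Rightarrow> H" where
  "circz i j = z (i + j) + hsmult hb (z (i + j - 1))"

definition circ :: "nat \<Rightarrow> H \<Rightarrow> H" where
  "circ i = lin (\<lambda>w. if w = [] \<or> Y \<notin> set w then 0
                      else cat (circz i (zidx w)) (wd (ztail w)))"

function qshw :: "letter list \<Rightarrow> letter list \<Rightarrow> H" where
  "qshw u v = (if u = [] then wd v else if v = [] then wd u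
     else if Y \<notin> set u \<or> Y \<notin> set v then 0
     else cat (z (zidx u)) (qshw (ztail u) v)
        + cat (z (zidx v)) (qshw u (ztail v))
        + cat (circz (zidx u) (zidx v)) (qshw (ztail u) (ztail v)))"
  by pat_completeness auto
termination
  by (relation "measure (\<lambda>(u, v). length u + length v)")
     (auto dest!: ztail_shorter simp: add_less_mono)

definition qsh :: "H \<Rightarrow> H \<Rightarrow> H" where
  "qsh p q = lin (\<lambda>u. lin (\<lambda>v. qshw u v) q) p"

fun gw :: "letter list \<Rightarrow> H" where
  "gw [] = wd []"
| "gw (X # u) = cat xx (gw u)"
| "gw (Y # u) = cat (hsmult tt xx + yy + sc (hb * tt)) (gw u)"

definition gamma :: "H \<Rightarrow> H" where "gamma = lin gw"

function Sw :: "letter list \<Rightarrow> H" where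
  "Sw u = (if u = [] then wd [] else if Y \<notin> set u then 0
     else cat (z (zidx u)) (Sw (ztail u)) + hsmult tt (circ (zidx u) (Sw (ztail u))))"
  by pat_completeness auto
termination
  by (relation "measure length") (auto dest: ztail_shorter)

definition S :: "H \<Rightarrow> H" where "S = lin Sw"

end

theory Submission
  imports Defs
begin

text \<open>Each identity is linear in v (for (iii) in w), so it suffices to check it on words
  z_n A, where the defining recursion of *_+ applies. Since gamma(z_k) = t x^k + z_k +
  hbar t x^(k-1), one has gamma(z_k) z_n A = z_k z_n A + t (z_k o+ z_n) A: each of the three
  summands of gamma(z_k) is a multiple of a word z_m A, and expanding them with the recursion
  the terms carrying t recombine into the factor 1 - t. For (ii) the same computation applies
  to S(z_k v) = z_k S(v) + t z_k o+ S(v), because S(v) is a combination of the empty word and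
  of words z_n A.\<close>

text \<open>With concatenation as monoid operation on words, H becomes the monoid ring, whose
  multiplication is cat.\<close>
instantiation list :: (type) monoid_add
begin
definition zero_list :: "'a list" where "zero_list = []"
definition plus_list :: "'a list \<Rightarrow> 'a list \<Rightarrow> 'a list" where "plus_list a b = a @ b"
instance by standard (auto simp: zero_list_def plus_list_def)
end

lemma zero_list_eq [simp]: "(0::'a list) = []"
  by (simp add: zero_list_def)

lemma plus_list_eq [simp]: "(a::'a list) + b = a @ b"
  by (simp add: plus_list_def)

declare qshw.simps [simp del] Sw.simps [simp del]

lemma wd_mult: "wd a * wd b = wd (a @ b)"
  by (simp add: wd_def mult_single)

lemma wd_Nil [simp]: "wd [] = 1"
  by (simp add: wd_def flip: zero_list_eq)

lemma hsmult_eq: "hsmult r p = Poly_Mapping.single [] r * p"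
  by (metis hsmult_def mult_map_scale_conv_mult zero_list_eq)

lemma lookup_hsmult: "Poly_Mapping.lookup (hsmult r p) u = r * Poly_Mapping.lookup p u"
  by (simp add: hsmult_def Poly_Mapping.map.rep_eq when_def)

lemma keys_hsmult: "Poly_Mapping.keys (hsmult c p) \<subseteq> Poly_Mapping.keys p"
  by (auto simp: in_keys_iff lookup_hsmult)

lemma hsmult_single: "hsmult r (Poly_Mapping.single u c) = Poly_Mapping.single u (r * c)"
  by (simp add: hsmult_def)

lemma hsmult_wd: "hsmult c (wd u) = Poly_Mapping.single u c"
  by (simp add: wd_def hsmult_single)

lemma hsmult_add_right [simp]: "hsmult r (p + q) = hsmult r p + hsmult r q"
  by (simp add: hsmult_eq distrib_left)

lemma hsmult_add_left [simp]: "hsmult (r + s) p = hsmult r p + hsmult s p"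
  by (simp add: hsmult_eq single_add distrib_right)

lemma hsmult_diff_left [simp]: "hsmult (r - s) p = hsmult r p - hsmult s p"
  by (simp add: hsmult_eq single_diff left_diff_distrib)

lemma hsmult_hsmult [simp]: "hsmult r (hsmult s p) = hsmult (r * s) p"
  by (simp add: hsmult_eq mult.assoc[symmetric] mult_single)

lemma hsmult_one [simp]: "hsmult 1 p = p"
  by (simp add: hsmult_eq flip: zero_list_eq)

lemma hsmult_zero_left [simp]: "hsmult 0 p = 0"
  by (simp add: hsmult_eq)

lemma hsmult_zero_right [simp]: "hsmult r 0 = 0"
  by (simp add: hsmult_eq)

lemma hsmult_mult_left [simp]: "hsmult r p * q = hsmult r (p * q)"
  by (simp add: hsmult_eq mult.assoc)

lemma hsmult_sum: "hsmult c (sum g A) = (\<Sum>i\<in>A. hsmult c (g i))"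
  by (simp add: hsmult_eq sum_distrib_left)

lemma lin_single: "lin f (Poly_Mapping.single u c) = hsmult c (f u)"
  by (cases "c = 0") (simp_all add: lin_def)

lemma lin_wd [simp]: "lin f (wd u) = f u"
  by (simp add: wd_def lin_single)

lemma lin_eq_sum_superset:
  assumes "finite K" "Poly_Mapping.keys p \<subseteq> K"
  shows "lin f p = (\<Sum>u\<in>K. hsmult (Poly_Mapping.lookup p u) (f u))"
  unfolding lin_def
  by (rule sum.mono_neutral_left) (use assms in \<open>auto simp: in_keys_iff\<close>)

lemma lin_add: "lin f (p + q) = lin f p + lin f q"
proof -
  let ?K = "Poly_Mapping.keys p \<union> Poly_Mapping.keys q"
  have "lin f (p + q) = (\<Sum>u\<in>?K. hsmult (Poly_Mapping.lookup (p + q) u) (f u))"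
    by (rule lin_eq_sum_superset) (simp_all add: keys_add)
  also have "\<dots> = (\<Sum>u\<in>?K. hsmult (Poly_Mapping.lookup p u) (f u))
                 + (\<Sum>u\<in>?K. hsmult (Poly_Mapping.lookup q u) (f u))"
    by (simp add: lookup_add sum.distrib)
  also have "\<dots> = lin f p + lin f q"
    by (simp add: lin_eq_sum_superset[where K = ?K])
  finally show ?thesis .
qed

lemma lin_hsmult: "lin f (hsmult c p) = hsmult c (lin f p)"
proof -
  have "lin f (hsmult c p) = (\<Sum>u\<in>Poly_Mapping.keys p. hsmult (Poly_Mapping.lookup (hsmult c p) u) (f u))"
    by (rule lin_eq_sum_superset) (simp_all add: keys_hsmult)
  then show ?thesis
    by (simp add: lin_def hsmult_sum lookup_hsmult)
qed

lemma lin_cong: "(\<And>u. u \<in> Poly_Mapping.keys p \<Longrightarrow> f u = g u) \<Longrightarrow> lin f p = lin g p"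
  by (simp add: lin_def)

lemma lin_fun_add: "lin (\<lambda>u. f u + g u) p = lin f p + lin g p"
  by (simp add: lin_def sum.distrib)

lemma lin_fun_hsmult: "lin (\<lambda>u. hsmult c (f u)) p = hsmult c (lin f p)"
  by (simp add: lin_def hsmult_sum mult.commute)

lemma lin_wd_self: "lin wd p = p"
proof (rule poly_mapping_eqI)
  fix k
  have "Poly_Mapping.lookup (lin wd p) k = (\<Sum>u\<in>Poly_Mapping.keys p. Poly_Mapping.lookup p u when u = k)"
    by (simp add: lin_def hsmult_wd lookup_sum lookup_single)
  then show "Poly_Mapping.lookup (lin wd p) k = Poly_Mapping.lookup p k"
    by (simp add: when_def in_keys_iff)
qed

definition hlinear :: "(H \<Rightarrow> H) \<Rightarrow> bool" where
  "hlinear F \<longleftrightarrow> (\<forall>p q. F (p + q) = F p + F q) \<and> (\<forall>c p. F (hsmult c p) = hsmult c (F p))"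

lemma hlinear_zero: "hlinear F \<Longrightarrow> F 0 = 0"
  by (metis hlinear_def hsmult_zero_left)

lemma hlinear_sum: "hlinear F \<Longrightarrow> F (sum g A) = (\<Sum>i\<in>A. F (g i))"
  by (induction A rule: infinite_finite_induct) (simp_all add: hlinear_zero hlinear_def)

lemma hlinear_eq_lin: "hlinear F \<Longrightarrow> F p = lin (\<lambda>u. F (wd u)) p"
  by (subst (1) lin_wd_self[symmetric]) (simp add: lin_def hlinear_sum hlinear_def)

lemma hlinear_eqI:
  assumes "hlinear F" "hlinear G" "\<And>u. u \<in> Poly_Mapping.keys p \<Longrightarrow> F (wd u) = G (wd u)"
  shows "F p = G p"
proof -
  have "F p = lin (\<lambda>u. F (wd u)) p" by (rule hlinear_eq_lin) fact
  also have "\<dots> = lin (\<lambda>u. G (wd u)) p" by (rule lin_cong) (rule assms(3))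
  also have "\<dots> = G p" by (rule hlinear_eq_lin[symmetric]) fact
  finally show ?thesis .
qed

lemma hlinear_id: "hlinear (\<lambda>x. x)"
  by (simp add: hlinear_def)

lemma hlinear_add: "hlinear F \<Longrightarrow> hlinear G \<Longrightarrow> hlinear (\<lambda>x. F x + G x)"
  by (simp add: hlinear_def)

lemma hlinear_hsmult: "hlinear F \<Longrightarrow> hlinear (\<lambda>x. hsmult c (F x))"
  by (simp add: hlinear_def mult.commute)

lemma hlinear_mult_right: "hlinear F \<Longrightarrow> hlinear (\<lambda>x. F x * a)"
  by (simp add: hlinear_def distrib_right)

lemma hlinear_lin: "hlinear F \<Longrightarrow> hlinear (\<lambda>x. lin f (F x))"
  by (simp add: hlinear_def lin_add lin_hsmult)

lemma hlinear_lin_lin: "hlinear F \<Longrightarrow> hlinear (\<lambda>x. lin (\<lambda>u. lin (g u) (F x)) p)"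
  by (simp add: hlinear_def lin_add lin_hsmult lin_fun_add lin_fun_hsmult)

lemma single_Nil_central: "Poly_Mapping.single [] c * p = p * Poly_Mapping.single [] c" for p :: H
proof -
  have "hsmult c p = p * Poly_Mapping.single [] c"
  proof (rule hlinear_eqI[where F = "hsmult c" and G = "\<lambda>p. p * Poly_Mapping.single [] c"])
    show "hlinear (hsmult c)"
      using hlinear_hsmult[OF hlinear_id] by simp
    show "hlinear (\<lambda>p. p * Poly_Mapping.single [] c)"
      by (rule hlinear_mult_right[OF hlinear_id])
    show "hsmult c (wd u) = wd u * Poly_Mapping.single [] c" for u
      by (simp add: wd_def hsmult_single mult_single)
  qed
  then show ?thesis by (simp add: hsmult_eq)
qed

lemma hsmult_mult_right [simp]: "p * hsmult r q = hsmult r (p * q)"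
  by (simp add: hsmult_eq mult.assoc single_Nil_central)

lemma hlinear_mult_left: "hlinear F \<Longrightarrow> hlinear (\<lambda>x. a * F x)"
  by (simp add: hlinear_def distrib_left)

lemma cat_eq_times [simp]: "cat p q = p * q"
proof -
  have "lin (\<lambda>v. wd (u @ v)) q = wd u * q" for u
    using hlinear_eq_lin[OF hlinear_mult_left[OF hlinear_id, of "wd u"], of q]
    by (simp add: wd_mult)
  then show ?thesis
    using hlinear_eq_lin[OF hlinear_mult_right[OF hlinear_id, of q], of p]
    by (simp add: cat_def)
qed

lemma hlinear_qsh_left: "hlinear F \<Longrightarrow> hlinear (\<lambda>x. qsh (F x) q)"
  unfolding qsh_def by (rule hlinear_lin)

lemma hlinear_qsh_right: "hlinear F \<Longrightarrow> hlinear (\<lambda>x. qsh p (F x))"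
  unfolding qsh_def by (rule hlinear_lin_lin)

lemma hlinear_S: "hlinear F \<Longrightarrow> hlinear (\<lambda>x. S (F x))"
  unfolding S_def by (rule hlinear_lin)

lemma hlinear_circ: "hlinear F \<Longrightarrow> hlinear (\<lambda>x. circ i (F x))"
  unfolding circ_def by (rule hlinear_lin)

lemmas hlinear_intros = hlinear_id hlinear_add hlinear_hsmult hlinear_mult_left
  hlinear_mult_right hlinear_qsh_left hlinear_qsh_right hlinear_S hlinear_circ

lemma qsh_add_left [simp]: "qsh (p1 + p2) q = qsh p1 q + qsh p2 q"
  and qsh_hsmult_left [simp]: "qsh (hsmult c p) q = hsmult c (qsh p q)"
  using hlinear_qsh_left[OF hlinear_id, of q] by (simp_all add: hlinear_def)

lemma qsh_add_right [simp]: "qsh p (q1 + q2) = qsh p q1 + qsh p q2"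
  and qsh_hsmult_right [simp]: "qsh p (hsmult c q) = hsmult c (qsh p q)"
  using hlinear_qsh_right[OF hlinear_id, of p] by (simp_all add: hlinear_def)

lemma qsh_one_left [simp]: "qsh 1 q = q"
proof -
  have "qshw [] = wd" by (rule ext, subst qshw.simps) simp
  then show ?thesis by (simp add: qsh_def lin_wd_self flip: wd_Nil)
qed

lemma qsh_one_right [simp]: "qsh p 1 = p"
proof -
  have "qshw u [] = wd u" for u by (subst qshw.simps) simp
  then show ?thesis by (simp add: qsh_def lin_wd_self flip: wd_Nil)
qed

lemma z_Suc: "z (Suc n) = wd (replicate n X @ [Y])"
  by (simp add: z_def)

lemma z_times_wd: "z (Suc n) * wd A = wd (replicate n X @ Y # A)"
  by (simp add: z_Suc wd_mult)

lemma xpow_times_z: "xpow n * (z (Suc p) * P) = z (Suc (n + p)) * P"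
  by (simp add: xpow_def z_Suc wd_mult replicate_add flip: mult.assoc)

lemma zidx_z_word [simp]: "zidx (replicate n X @ Y # A) = Suc n"
  unfolding zidx_def by (subst takeWhile_append2) auto

lemma ztail_z_word [simp]: "ztail (replicate n X @ Y # A) = A"
  by (simp add: ztail_def)

lemma z_word_decomp:
  assumes "Y \<in> set u"
  obtains n A where "wd u = z (Suc n) * wd A"
proof -
  obtain B A where u: "u = B @ Y # A" and "Y \<notin> set B"
    using split_list_first[OF assms] by blast
  then have "B = replicate (length B) X"
    by (metis letter.exhaust replicate_length_same)
  with u have "wd u = z (Suc (length B)) * wd A"
    by (metis z_times_wd)
  then show thesis by (rule that)
qed

text \<open>The span of the words on which the recursions defining qshw and Sw do not collapse
  to 0: the empty word and the words z_n A.\<close>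
definition Hz :: "H set" where
  "Hz = {p. \<forall>u\<in>Poly_Mapping.keys p. u = [] \<or> Y \<in> set u}"

lemma hlinear_eqI_Hz:
  assumes "hlinear F" "hlinear G" "p \<in> Hz" "F 1 = G 1"
    and "\<And>n A. F (z (Suc n) * wd A) = G (z (Suc n) * wd A)"
  shows "F p = G p"
proof (rule hlinear_eqI[OF assms(1,2)])
  fix u assume "u \<in> Poly_Mapping.keys p"
  with \<open>p \<in> Hz\<close> consider "u = []" | "Y \<in> set u" by (auto simp: Hz_def)
  then show "F (wd u) = G (wd u)"
    by cases (use assms(4,5) in \<open>auto elim: z_word_decomp\<close>)
qed

lemma hlinear_eqI_Hy:
  assumes "hlinear F" "hlinear G" "p \<in> Hy"
    and "\<And>n A. F (z (Suc n) * wd A) = G (z (Suc n) * wd A)"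
  shows "F p = G p"
proof (rule hlinear_eqI[OF assms(1,2)])
  fix u assume "u \<in> Poly_Mapping.keys p"
  with \<open>p \<in> Hy\<close> have "u \<noteq> [] \<and> last u = Y" by (simp add: Hy_def)
  then have "Y \<in> set u" by (metis last_in_set)
  then show "F (wd u) = G (wd u)"
    by (auto elim: z_word_decomp simp: assms(4))
qed

lemma zero_in_Hz: "0 \<in> Hz"
  by (simp add: Hz_def)

lemma add_in_Hz: "p \<in> Hz \<Longrightarrow> q \<in> Hz \<Longrightarrow> p + q \<in> Hz"
  unfolding Hz_def using keys_add[of p q] by blast

lemma hsmult_in_Hz: "p \<in> Hz \<Longrightarrow> hsmult c p \<in> Hz"
  unfolding Hz_def using keys_hsmult[of c p] by blast

lemma sum_in_Hz: "(\<And>i. i \<in> A \<Longrightarrow> g i \<in> Hz) \<Longrightarrow> sum g A \<in> Hz"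
  by (induction A rule: infinite_finite_induct) (auto intro!: add_in_Hz simp: zero_in_Hz)

lemma lin_in_Hz: "(\<And>u. f u \<in> Hz) \<Longrightarrow> lin f p \<in> Hz"
  unfolding lin_def by (intro sum_in_Hz hsmult_in_Hz)

lemma z_times_in_Hz: "z i * P \<in> Hz"
proof -
  have "u = [] \<or> Y \<in> set u" if u: "u \<in> Poly_Mapping.keys (z i * P)" for u
  proof -
    obtain a b where "a \<in> Poly_Mapping.keys (z i)" "u = a @ b"
      using keys_mult[of "z i" P] u by auto
    then show ?thesis by (simp add: z_def wd_def)
  qed
  then show ?thesis by (simp add: Hz_def)
qed

lemma one_in_Hz: "1 \<in> Hz"
proof -
  have "Poly_Mapping.keys (wd []) = {[]}"
    by (simp add: wd_def)
  then show ?thesis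
    by (simp add: Hz_def)
qed

lemma circ_in_Hz: "circ i P \<in> Hz"
  unfolding circ_def circz_def
  by (rule lin_in_Hz) (simp add: distrib_right zero_in_Hz add_in_Hz hsmult_in_Hz z_times_in_Hz)

lemma S_in_Hz: "S v \<in> Hz"
proof -
  have "Sw u \<in> Hz" for u
    by (subst Sw.simps) (simp add: one_in_Hz zero_in_Hz add_in_Hz hsmult_in_Hz z_times_in_Hz circ_in_Hz)
  then show ?thesis
    unfolding S_def by (rule lin_in_Hz)
qed

lemma qsh_z_times:
  "qsh (z (Suc i) * P) (z (Suc j) * Q)
   = z (Suc i) * qsh P (z (Suc j) * Q) + z (Suc j) * qsh (z (Suc i) * P) Q
     + circz (Suc i) (Suc j) * qsh P Q" (is "?F P Q = ?G P Q")
proof -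
  have words: "?F (wd A) (wd B) = ?G (wd A) (wd B)" for A B
    by (simp add: z_times_wd qsh_def) (subst qshw.simps, simp)
  show ?thesis
  proof (rule hlinear_eqI[where F = "\<lambda>P. ?F P Q" and G = "\<lambda>P. ?G P Q"])
    show "?F (wd A) Q = ?G (wd A) Q" for A
      by (rule hlinear_eqI[where F = "?F (wd A)" and G = "?G (wd A)"])
        (intro hlinear_intros, intro hlinear_intros, rule words)
  qed (intro hlinear_intros)+
qed

lemma circz_Suc_Suc:
  "circz (Suc i) (Suc j) = z (Suc (Suc (i + j))) + hsmult hb (z (Suc (i + j)))"
  by (simp add: circz_def)

lemma gamma_z: "gamma (z (Suc k)) = hsmult tt (xpow (Suc k)) + z (Suc k) + hsmult (hb * tt) (xpow k)"
proof -
  have "gw (replicate k X @ u) = xpow k * gw u" for u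
    by (induction k) (simp_all add: xx_def xpow_def wd_mult flip: mult.assoc)
  then have "gamma (z (Suc k)) = xpow k * gw [Y]"
    by (simp add: gamma_def z_Suc)
  also have "gw [Y] = hsmult tt (wd [X]) + wd [Y] + hsmult (hb * tt) 1"
    by (simp add: xx_def yy_def sc_def hsmult_eq)
  finally show ?thesis
    by (simp add: distrib_left xpow_def z_Suc wd_mult replicate_append_same)
qed

lemma gamma_z_times_z:
  "gamma (z (Suc k)) * (z (Suc n) * Q) = z (Suc k) * (z (Suc n) * Q) + hsmult tt (circz (Suc k) (Suc n) * Q)"
  by (simp add: gamma_z circz_Suc_Suc xpow_times_z algebra_simps)

lemma circ_z_times: "circ i (z (Suc n) * Q) = circz i (Suc n) * Q"
  by (rule hlinear_eqI[where F = "\<lambda>Q. circ i (z (Suc n) * Q)" and G = "\<lambda>Q. circz i (Suc n) * Q"])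
    (intro hlinear_intros, intro hlinear_intros, simp add: circ_def z_times_wd)

lemma circ_one: "circ i 1 = 0"
  by (simp add: circ_def flip: wd_Nil)

lemma S_z_times: "S (z (Suc k) * Q) = z (Suc k) * S Q + hsmult tt (circ (Suc k) (S Q))"
  (is "?F Q = ?G Q")
proof (rule hlinear_eqI[where F = ?F and G = ?G])
  fix u
  show "?F (wd u) = ?G (wd u)"
    by (simp add: S_def z_times_wd) (subst Sw.simps, simp)
qed (intro hlinear_intros)+

lemma qsh_gamma_times_z_left:
  "qsh (gamma (z (Suc k)) * (z (Suc n) * P)) (z (Suc l) * Q)
   = gamma (z (Suc k)) * qsh (z (Suc n) * P) (z (Suc l) * Q)
   + z (Suc l) * qsh (gamma (z (Suc k)) * (z (Suc n) * P)) Q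
   + hsmult (1 - tt) (circz (Suc k) (Suc l) * qsh (z (Suc n) * P) Q)"
  by (simp add: gamma_z qsh_z_times circz_Suc_Suc xpow_times_z algebra_simps)

lemma qsh_gamma_times_z_right:
  "qsh (z (Suc n) * P) (gamma (z (Suc l)) * (z (Suc m) * Q))
   = z (Suc n) * qsh P (gamma (z (Suc l)) * (z (Suc m) * Q))
   + gamma (z (Suc l)) * qsh (z (Suc n) * P) (z (Suc m) * Q)
   + hsmult (1 - tt) (circz (Suc n) (Suc l) * qsh P (z (Suc m) * Q))"
  by (simp add: gamma_z qsh_z_times circz_Suc_Suc xpow_times_z algebra_simps)

lemma qsh_gamma_times_left:
  assumes "v \<in> Hy"
  shows "qsh (gamma (z (Suc k)) * v) (z (Suc l) * w)
   = gamma (z (Suc k)) * qsh v (z (Suc l) * w)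
   + z (Suc l) * qsh (gamma (z (Suc k)) * v) w
   + hsmult (1 - tt) (circz (Suc k) (Suc l) * qsh v w)" (is "?F v = ?G v")
  by (rule hlinear_eqI_Hy[where F = ?F and G = ?G, OF _ _ assms])
    (intro hlinear_intros, intro hlinear_intros, rule qsh_gamma_times_z_left)

lemma qsh_gamma_times_right:
  assumes "w \<in> Hy"
  shows "qsh (z (Suc n) * V) (gamma (z (Suc l)) * w)
   = z (Suc n) * qsh V (gamma (z (Suc l)) * w)
   + gamma (z (Suc l)) * qsh (z (Suc n) * V) w
   + hsmult (1 - tt) (circz (Suc n) (Suc l) * qsh V w)" (is "?F w = ?G w")
  by (rule hlinear_eqI_Hy[where F = ?F and G = ?G, OF _ _ assms])
    (intro hlinear_intros, intro hlinear_intros, rule qsh_gamma_times_z_right)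

lemma qsh_S_z_times_left:
  "qsh (S (z (Suc k) * v)) (z (Suc l) * w)
   = gamma (z (Suc k)) * qsh (S v) (z (Suc l) * w)
   + z (Suc l) * qsh (S (z (Suc k) * v)) w
   + hsmult (1 - tt) (circz (Suc k) (Suc l) * qsh (S v) w)"
proof -
  let ?T = "\<lambda>s. z (Suc k) * s + hsmult tt (circ (Suc k) s)"
  have "qsh (?T s) (z (Suc l) * w)
     = gamma (z (Suc k)) * qsh s (z (Suc l) * w) + z (Suc l) * qsh (?T s) w
     + hsmult (1 - tt) (circz (Suc k) (Suc l) * qsh s w)" (is "?F s = ?G s")
    if "s \<in> Hz" for s
  proof (rule hlinear_eqI_Hz[where F = ?F and G = ?G, OF _ _ that])
    show "?F 1 = ?G 1"
      by (simp add: circ_one gamma_z qsh_z_times[of k 1, simplified] circz_Suc_Suc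
          xpow_times_z algebra_simps)
    show "?F (z (Suc n) * wd A) = ?G (z (Suc n) * wd A)" for n A
      using qsh_gamma_times_z_left[of k n "wd A" l w]
      by (simp add: circ_z_times gamma_z_times_z)
  qed (intro hlinear_intros)+
  then show ?thesis
    by (simp add: S_z_times S_in_Hz)
qed

theorem lemma2p2:
  shows "(\<forall>k l v w. 1 \<le> k \<longrightarrow> 1 \<le> l \<longrightarrow> v \<in> Hy \<longrightarrow> w \<in> H1 \<longrightarrow>
            qsh (cat (gamma (z k)) v) (cat (z l) w)
          = cat (gamma (z k)) (qsh v (cat (z l) w))
            + cat (z l) (qsh (cat (gamma (z k)) v) w)
            + hsmult (1 - tt) (cat (circz k l) (qsh v w)))
    \<and> (\<forall>k l v w. 1 \<le> k \<longrightarrow> 1 \<le> l \<longrightarrow> v \<in> H1 \<longrightarrow> w \<in> H1 \<longrightarrow>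
            qsh (S (cat (z k) v)) (cat (z l) w)
          = cat (gamma (z k)) (qsh (S v) (cat (z l) w))
            + cat (z l) (qsh (S (cat (z k) v)) w)
            + hsmult (1 - tt) (cat (circz k l) (qsh (S v) w)))
    \<and> (\<forall>k l p V v w. 1 \<le> l \<longrightarrow> 1 \<le> p \<longrightarrow> V \<in> H1 \<longrightarrow> v = cat (z p) V \<longrightarrow> w \<in> Hy \<longrightarrow>
            qsh (cat (xpow k) v) (cat (gamma (z l)) w)
          = cat (z (k + p)) (qsh V (cat (gamma (z l)) w))
            + cat (gamma (z l)) (qsh (cat (xpow k) v) w)
            + hsmult (1 - tt) (cat (circz (k + p) l) (qsh V w)))"
proof -
  have pos_Suc: "1 \<le> n \<longleftrightarrow> (\<exists>m. n = Suc m)" for n :: nat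
    by presburger
  show ?thesis
    unfolding cat_eq_times pos_Suc
    by (auto simp: qsh_gamma_times_left qsh_S_z_times_left qsh_gamma_times_right xpow_times_z)
qed

end
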